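(* Let $M\ge 2$ modalities be given, with latent representations $z^{(1)},\ldots,z^{(M)}\in\mathbb{R}^d$ (Euclidean norm $\|\cdot\|_2$; $\mathrm{dist}(x,\mathcal{S})=\inf_{s\in\mathcal{S}}\|x-s\|_2$, $\mathcal{B}(\mathcal{S},r)=\{x:\mathrm{dist}(x,\mathcal{S})\le r\}$). Let $\epsilon>0$, $\delta>2\epsilon$, and for each modality $m$ and class $c\in\{1,\ldots,K\}$ let $\mathcal{M}_c^{(m)}\subset\mathbb{R}^d$ be nonempty sets with $\inf_{u\in\mathcal{M}_i^{(m)},v\in\mathcal{M}_j^{(m)}}\|u-v\|_2\ge\delta$ for all $m$ and $i\neq j$. Fix a modality $B$ and classes $y\neq k$ with $z^{(B)}\in\mathcal{B}(\mathcal{M}_k^{(B)},\epsilon)$. Suppose that for every modality $n\neq B$ one has $z^{(n)}\in\mathcal{B}(\mathcal{M}_y^{(n)},\epsilon)$ and the map $\Phi_{n\to B}:\mathbb{R}^d\to\mathbb{R}^d$ is $\xi$-semantically consistent with $\xi\le\epsilon$, i.e. $\mathrm{dist}(\Phi_{n\to B}(u),\mathcal{M}_y^{(B)})\le\xi$ for all $u\in\mathcal{B}(\mathcal{M}_y^{(n)},\epsilon)$. Let $\lambda\ge0$, $\kappa>0$, $\theta_r\in\mathbb{R}$, $\epsilon_\gamma>0$, let $\mathcal{E}_{\mathrm{intra}}^{(n)}\in\mathbb{R}$ be arbitrary, let $\sigma$ be the logistic sigmoid, and define $$\mathcal{E}_{\mathrm{inter}}^{(n\to B)}=\|\Phi_{n\to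 B}(z^{(n)})-z^{(B)}\|_2^2,\qquad \gamma_{\mathrm{int}}^{(B)}=\lambda\sum_{n\neq B}\sigma\big(\theta_r-\mathcal{E}_{\mathrm{intra}}^{(n)}\big)\exp\!\Big(-\frac{\mathcal{E}_{\mathrm{inter}}^{(n\to B)}}{\kappa}\Big),\qquad \tilde{\gamma}_{\mathrm{int}}^{(B)}=\gamma_{\mathrm{int}}^{(B)}+\epsilon_\gamma.$$ Then, with $D=(\delta-2\epsilon)^2$, $$\gamma_{\mathrm{int}}^{(B)}\le\lambda(M-1)\exp\!\Big(-\frac{D}{\kappa}\Big),\qquad\text{and consequently}\qquad \tilde{\gamma}_{\mathrm{int}}^{(B)}\le\lambda(M-1)\exp\!\Big(-\frac{D}{\kappa}\Big)+\epsilon_\gamma.$$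
   Context: This is the multimodal fusion setting: $\gamma_{\mathrm{int}}^{(B)}$ is the interaction gate of modality $B$, aggregating cross-modal consensus from the other modalities $n$, weighted by reliability scores $r^{(n)}=\sigma(\theta_r-\mathcal{E}_{\mathrm{intra}}^{(n)})\in[0,1]$ where $\mathcal{E}_{\mathrm{intra}}^{(n)}$ is an intra-modal transport cost; $\epsilon_\gamma$ is a small numerical floor. The hypothesis says modality $B$ encodes a class $k$ that conflicts with the class $y$ encoded by every other (reliable, semantically consistent) modality. *)

theory Defs
  imports "HOL-Analysis.Analysis"
begin

definition sigmoid :: "real \<Rightarrow> real" where
  "sigmoid t = 1 / (1 + exp (- t))"

definition setdistpt :: "'a::euclidean_space \<Rightarrow> 'a set \<Rightarrow> real" where
  "setdistpt x S = Inf {norm (x - s) | s. s \<in> S}"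

definition nbhd :: "'a::euclidean_space set \<Rightarrow> real \<Rightarrow> 'a set" where
  "nbhd S r = {x. setdistpt x S \<le> r}"

definition E_inter :: "('a::euclidean_space \<Rightarrow> 'a) \<Rightarrow> 'a \<Rightarrow> 'a \<Rightarrow> real" where
  "E_inter Phi zn zB = (norm (Phi zn - zB))\<^sup>2"

definition gamma_int ::
  "nat \<Rightarrow> nat \<Rightarrow> real \<Rightarrow> real \<Rightarrow> real \<Rightarrow> (nat \<Rightarrow> real) \<Rightarrow> (nat \<Rightarrow> 'a::euclidean_space \<Rightarrow> 'a)
    \<Rightarrow> (nat \<Rightarrow> 'a) \<Rightarrow> real" where
  "gamma_int M B lam kappa theta_r E_intra Phi z =
     lam * (\<Sum>n\<in>{1..M} - {B}. sigmoid (theta_r - E_intra n) * exp (- E_inter (Phi n) (z n) (z B) / kappa))"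

end

theory Submission
  imports Defs
begin

text \<open>The conflicting modality B sits within eps of class k, while every translated
  consensus signal lands within xi \<le> eps of class y in modality B. Since the two class
  manifolds of B are at distance at least delta, the triangle inequality forces each
  inter-modal cost to be at least (delta - 2 eps)^2; the reliability weights are sigmoids,
  hence at most 1, so each of the M - 1 summands of the gate is at most exp (-D / kappa).\<close>

lemma sigmoid_nonneg: "0 \<le> sigmoid t"
  by (simp add: sigmoid_def add_pos_pos less_imp_le)

lemma sigmoid_le_one: "sigmoid t \<le> 1"
  by (simp add: sigmoid_def add_pos_pos)

lemma setdistpt_eq_setdist: "S \<noteq> {} \<Longrightarrow> setdistpt x S = setdist {x} S"
  by (simp add: setdistpt_def setdist_def dist_norm)

lemma Inf_norm_diff_eq_setdist:
  "S \<noteq> {} \<Longrightarrow> T \<noteq> {} \<Longrightarrow> Inf {norm (u - v) | u v. u \<in> S \<and> v \<in> T} = setdist S T"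
  by (simp add: setdist_def dist_norm)

lemma setdist_le_setdistpt_dist_setdistpt:
  assumes "S \<noteq> {}" "T \<noteq> {}"
  shows "setdist S T \<le> setdistpt a S + dist a b + setdistpt b T"
proof -
  have "setdist S T \<le> setdist S {a} + setdist {a} T"
    by (rule setdist_triangle)
  also have "\<dots> \<le> setdist S {a} + (setdist {a} {b} + setdist {b} T)"
    using setdist_triangle[of "{a}" T b] by simp
  finally show ?thesis
    using assms by (simp add: setdistpt_eq_setdist setdist_sym)
qed

lemma setdist_minus_radii_le_dist:
  assumes "S \<noteq> {}" "T \<noteq> {}" "a \<in> nbhd S r" "b \<in> nbhd T s"
  shows "setdist S T - r - s \<le> dist a b"
  using setdist_le_setdistpt_dist_setdistpt[OF assms(1,2), of a b] assms(3,4)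
  by (simp add: nbhd_def)

lemma gamma_int_le_uniform_bound:
  assumes "B \<in> {1..M}" "lam \<ge> 0" "kappa > 0"
    and cost: "\<And>n. n \<in> {1..M} - {B} \<Longrightarrow> D \<le> E_inter (Phi n) (z n) (z B)"
  shows "gamma_int M B lam kappa theta_r E_intra Phi z \<le> lam * (real M - 1) * exp (- D / kappa)"
proof -
  have term_le: "sigmoid (theta_r - E_intra n) * exp (- E_inter (Phi n) (z n) (z B) / kappa)
      \<le> exp (- D / kappa)" if "n \<in> {1..M} - {B}" for n
  proof -
    have "exp (- E_inter (Phi n) (z n) (z B) / kappa) \<le> exp (- D / kappa)"
      using cost[OF that] \<open>kappa > 0\<close> by (simp add: divide_right_mono)
    then show ?thesis
      using mult_mono[OF sigmoid_le_one] by (simp add: sigmoid_nonneg)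
  qed
  have "(\<Sum>n\<in>{1..M} - {B}. sigmoid (theta_r - E_intra n) * exp (- E_inter (Phi n) (z n) (z B) / kappa))
      \<le> (\<Sum>n\<in>{1..M} - {B}. exp (- D / kappa))"
    by (rule sum_mono) (rule term_le)
  also have "\<dots> = (real M - 1) * exp (- D / kappa)"
    using \<open>B \<in> {1..M}\<close> by (simp add: of_nat_diff)
  finally show ?thesis
    unfolding gamma_int_def mult.assoc using \<open>lam \<ge> 0\<close> by (rule mult_left_mono)
qed

theorem corollary4p5:
  fixes M K B y k :: nat
    and z :: "nat \<Rightarrow> 'd::euclidean_space"
    and Mf :: "nat \<Rightarrow> nat \<Rightarrow> 'd set"
    and Phi :: "nat \<Rightarrow> 'd \<Rightarrow> 'd"
    and eps delta xi lam kappa theta_r eps_gamma :: real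
    and E_intra :: "nat \<Rightarrow> real"
  assumes "M \<ge> 2"
    and "eps > 0" and "delta > 2 * eps"
    and nonempty: "\<forall>m\<in>{1..M}. \<forall>c\<in>{1..K}. Mf m c \<noteq> {}"
    and sep: "\<forall>m\<in>{1..M}. \<forall>i\<in>{1..K}. \<forall>j\<in>{1..K}. i \<noteq> j \<longrightarrow>
               Inf {norm (u - v) | u v. u \<in> Mf m i \<and> v \<in> Mf m j} \<ge> delta"
    and "B \<in> {1..M}" and "y \<in> {1..K}" and "k \<in> {1..K}" and "y \<noteq> k"
    and "z B \<in> nbhd (Mf B k) eps"
    and "\<forall>n\<in>{1..M} - {B}. z n \<in> nbhd (Mf n y) eps"
    and "xi \<le> eps"
    and "\<forall>n\<in>{1..M} - {B}. \<forall>u\<in>nbhd (Mf n y) eps. setdistpt (Phi n u) (Mf B y) \<le> xi"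
    and "lam \<ge> 0" and "kappa > 0" and "eps_gamma > 0"
  shows "gamma_int M B lam kappa theta_r E_intra Phi z
           \<le> lam * (real M - 1) * exp (- ((delta - 2 * eps)\<^sup>2) / kappa)
       \<and> gamma_int M B lam kappa theta_r E_intra Phi z + eps_gamma
           \<le> lam * (real M - 1) * exp (- ((delta - 2 * eps)\<^sup>2) / kappa) + eps_gamma"
proof -
  have ne_y: "Mf B y \<noteq> {}" and ne_k: "Mf B k \<noteq> {}"
    using nonempty assms(6-8) by auto
  have "delta \<le> Inf {norm (u - v) | u v. u \<in> Mf B y \<and> v \<in> Mf B k}"
    using sep assms(6-9) by blast
  then have classes_apart: "delta \<le> setdist (Mf B y) (Mf B k)"
    by (simp add: Inf_norm_diff_eq_setdist[OF ne_y ne_k])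
  have "(delta - 2 * eps)\<^sup>2 \<le> E_inter (Phi n) (z n) (z B)" if n: "n \<in> {1..M} - {B}" for n
  proof -
    have "Phi n (z n) \<in> nbhd (Mf B y) eps"
      using assms(11-13) n by (force simp: nbhd_def)
    then have "delta - 2 * eps \<le> dist (Phi n (z n)) (z B)"
      using setdist_minus_radii_le_dist[OF ne_y ne_k _ assms(10)] classes_apart by fastforce
    then show ?thesis
      unfolding E_inter_def dist_norm using assms(3) by (intro power_mono) auto
  qed
  then have "gamma_int M B lam kappa theta_r E_intra Phi z
      \<le> lam * (real M - 1) * exp (- ((delta - 2 * eps)\<^sup>2) / kappa)"
    using assms(6,14,15) by (intro gamma_int_le_uniform_bound) auto
  then show ?thesis by simp
qed

end
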